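(* Assume all deadlines are positive integers. For every $\bar d\in\mathcal D$ and every integer $q$ with $1\le q\le\lfloor \bar d/2\rfloor$, define $\mathcal K_1(\bar d,q)=\{k\in\mathcal K(\bar d): t_k>\bar d-q\}$ and $\mathcal K_2(\bar d,q)=\{k\in\mathcal K(\bar d): q\le t_k\le\bar d-q\}$. Then for every feasible solution $(\rho_{kp})$ of $B(\mathcal K)$, the vector $\rho_k=\sum_{p\in\mathcal P}\rho_{kp}$ satisfies $$\sum_{k\in\mathcal K_1(\bar d,q)}\bar d\,\rho_k+\sum_{k\in\mathcal K_2(\bar d,q)}t_k\,\rho_k\le \bar d\,|\mathcal P|.$$
   Context: Let $\mathcal O$ be a finite set of orders, each order $o\in\mathcal O$ having a deadline $\bar d_o>0$; let $\mathcal D=\{\bar d_o: o\in\mathcal O\}$ be the set of distinct deadlines and let $\mathcal P$ be a finite nonempty set of pickers. Let $\mathcal K$ be a finite set of routes; each route $k\in\mathcal K$ has a nonempty batch of orders $\mathcal O_k\subseteq\mathcal O$ and a duration $t_k>0$, and its deadline is $\bar d_k=\min_{o\in\mathcal O_k}\bar d_o$. Write $\mathcal K(o)=\{k\in\mathcal K: o\in\mathcal O_k\}$ and $\mathcal K(\bar d)=\{k\in\mathcal K:\bar d_k\le\bar d\}$. Formulation $B(\mathcal K)$: binary variables $\rho_{kp}\in\{0,1\}$ ($k\in\mathcal K,p\in\mathcal P$); minimize $\sum_{k\in\mathcal K}t_k\sum_{p\in\mathcal P}\rho_{kp}$ subject to $\sum_{k\in\mathcal K(o)}\sum_{p\in\mathcal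 P}\rho_{kp}\ge 1$ for all $o\in\mathcal O$, and $\sum_{k\in\mathcal K(\bar d)}t_k\rho_{kp}\le\bar d$ for all $\bar d\in\mathcal D$, $p\in\mathcal P$. *)

theory Defs
  imports Complex_Main
begin

definition route_deadline :: "('o \<Rightarrow> real) \<Rightarrow> ('k \<Rightarrow> 'o set) \<Rightarrow> 'k \<Rightarrow> real" where
  "route_deadline dl Ob k = Min (dl ` Ob k)"

definition routes_upto :: "'k set \<Rightarrow> ('o \<Rightarrow> real) \<Rightarrow> ('k \<Rightarrow> 'o set) \<Rightarrow> real \<Rightarrow> 'k set" where
  "routes_upto K dl Ob d = {k \<in> K. route_deadline dl Ob k \<le> d}"

definition feasible_B ::
  "'o set \<Rightarrow> 'k set \<Rightarrow> 'p set \<Rightarrow> ('o \<Rightarrow> real) \<Rightarrow> ('k \<Rightarrow> 'o set) \<Rightarrow> ('k \<Rightarrow> real)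
    \<Rightarrow> ('k \<Rightarrow> 'p \<Rightarrow> real) \<Rightarrow> bool" where
  "feasible_B Ords K P dl Ob t rho \<longleftrightarrow>
     (\<forall>k\<in>K. \<forall>p\<in>P. rho k p \<in> {0, 1}) \<and>
     (\<forall>x\<in>Ords. (\<Sum>k\<in>{k\<in>K. x \<in> Ob k}. \<Sum>p\<in>P. rho k p) \<ge> 1) \<and>
     (\<forall>d\<in>dl ` Ords. \<forall>p\<in>P. (\<Sum>k\<in>routes_upto K dl Ob d. t k * rho k p) \<le> d)"

end

theory Submission
  imports Defs
begin

text \<open>Each picker contributes at most \<open>d\<close> to the left-hand side. If it performs a route of
  duration \<open>> d - q\<close>, then, since \<open>2 q \<le> d\<close>, no second route of duration \<open>\<ge> q\<close> fits into its
  capacity \<open>d\<close>, so its contribution is exactly \<open>d\<close>; otherwise its contribution is at most the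
  total duration of its routes, which is \<open>\<le> d\<close>. Summing over the pickers gives the bound.\<close>

lemma two_selected_le_sum:
  fixes t r :: "'k \<Rightarrow> real"
  assumes "finite R" and "\<forall>k\<in>R. r k \<in> {0, 1}" and "\<forall>k\<in>R. t k > 0"
    and "i \<in> R" and "j \<in> R" and "i \<noteq> j" and "r i = 1" and "r j = 1"
  shows "t i + t j \<le> (\<Sum>k\<in>R. t k * r k)"
proof -
  have "t i + t j = (\<Sum>k\<in>{i, j}. t k * r k)"
    using assms(6-8) by simp
  also have "\<dots> \<le> (\<Sum>k\<in>R. t k * r k)"
    by (rule sum_mono2) (use assms in \<open>auto simp: less_imp_le\<close>)
  finally show ?thesis .
qed

lemma long_medium_bound_single_picker:
  fixes t r :: "'k \<Rightarrow> real" and d q :: real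
  assumes fin: "finite R" and bin: "\<forall>k\<in>R. r k \<in> {0, 1}" and pos: "\<forall>k\<in>R. t k > 0"
    and cap: "(\<Sum>k\<in>R. t k * r k) \<le> d" and q: "2 * q \<le> d"
  shows "(\<Sum>k\<in>{k\<in>R. t k > d - q}. d * r k)
       + (\<Sum>k\<in>{k\<in>R. q \<le> t k \<and> t k \<le> d - q}. t k * r k) \<le> d"
proof -
  let ?Long = "{k\<in>R. t k > d - q}" and ?Medium = "{k\<in>R. q \<le> t k \<and> t k \<le> d - q}"
  show ?thesis
  proof (cases "\<exists>l\<in>?Long. r l = 1")
    case False
    then have "(\<Sum>k\<in>?Long. d * r k) = 0"
      using bin by (intro sum.neutral) auto
    moreover have "(\<Sum>k\<in>?Medium. t k * r k) \<le> (\<Sum>k\<in>R. t k * r k)"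
      by (rule sum_mono2) (use fin bin pos in \<open>auto simp: less_imp_le\<close>)
    ultimately show ?thesis
      using cap by simp
  next
    case True
    then obtain l where l: "l \<in> ?Long" "r l = 1" by blast
    have unselected: "r k = 0" if "k \<in> ?Long \<union> ?Medium" "k \<noteq> l" for k
    proof (rule ccontr)
      assume "r k \<noteq> 0"
      with bin that have "r k = 1" by auto
      then have "t l + t k \<le> d"
        using two_selected_le_sum[OF fin bin pos, of l k] l that cap
        by auto
      moreover have "t k \<ge> q"
        using that q by auto
      ultimately show False
        using l by simp
    qed
    have "(\<Sum>k\<in>?Long. d * r k) = d * r l + (\<Sum>k\<in>?Long - {l}. d * r k)"
      by (rule sum.remove) (use fin l in auto)
    also have "\<dots> = d"
      using l unselected by simp
    finally have "(\<Sum>k\<in>?Long. d * r k) = d" .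
    moreover have "l \<notin> ?Medium"
      using l by auto
    then have "(\<Sum>k\<in>?Medium. t k * r k) = 0"
      using unselected by (intro sum.neutral) auto
    ultimately show ?thesis by simp
  qed
qed

lemma twice_le_of_floor_half:
  fixes q :: int and d :: real
  assumes "q \<le> \<lfloor>d / 2\<rfloor>"
  shows "2 * real_of_int q \<le> d"
proof -
  have "real_of_int q \<le> real_of_int \<lfloor>d / 2\<rfloor>"
    using assms by linarith
  also have "\<dots> \<le> d / 2"
    by (rule of_int_floor_le)
  finally show ?thesis by simp
qed

theorem proposition4:
  fixes Ords :: "'o set" and K :: "'k set" and P :: "'p set"
    and dl :: "'o \<Rightarrow> real" and Ob :: "'k \<Rightarrow> 'o set" and t :: "'k \<Rightarrow> real"
    and rho :: "'k \<Rightarrow> 'p \<Rightarrow> real" and d :: real and q :: int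
  assumes "finite Ords" and "finite K" and "finite P" and "P \<noteq> {}"
    and "\<forall>x\<in>Ords. dl x > 0"
    and "\<forall>x\<in>Ords. dl x \<in> \<int>"
    and "\<forall>k\<in>K. Ob k \<noteq> {} \<and> Ob k \<subseteq> Ords"
    and "\<forall>k\<in>K. t k > 0"
    and "d \<in> dl ` Ords"
    and "1 \<le> q" and "q \<le> \<lfloor>d / 2\<rfloor>"
    and "feasible_B Ords K P dl Ob t rho"
  shows "(\<Sum>k\<in>{k\<in>routes_upto K dl Ob d. t k > d - of_int q}. d * (\<Sum>p\<in>P. rho k p))
       + (\<Sum>k\<in>{k\<in>routes_upto K dl Ob d. of_int q \<le> t k \<and> t k \<le> d - of_int q}. t k * (\<Sum>p\<in>P. rho k p))
       \<le> d * real (card P)"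
proof -
  let ?R = "routes_upto K dl Ob d"
  let ?Long = "{k\<in>?R. t k > d - of_int q}"
  let ?Medium = "{k\<in>?R. of_int q \<le> t k \<and> t k \<le> d - of_int q}"
  have R: "finite ?R" "?R \<subseteq> K"
    using assms(2) by (auto simp: routes_upto_def)
  have bin: "\<forall>k\<in>K. \<forall>p\<in>P. rho k p \<in> {0, 1}"
    and cap: "\<forall>p\<in>P. (\<Sum>k\<in>?R. t k * rho k p) \<le> d"
    using assms(9,12) unfolding feasible_B_def by auto
  have picker: "(\<Sum>k\<in>?Long. d * rho k p) + (\<Sum>k\<in>?Medium. t k * rho k p) \<le> d" if "p \<in> P" for p
    using long_medium_bound_single_picker[of ?R "\<lambda>k. rho k p" t d "of_int q"]
      R bin cap that assms(8) twice_le_of_floor_half[OF assms(11)] by blast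
  have "(\<Sum>k\<in>?Long. d * (\<Sum>p\<in>P. rho k p)) + (\<Sum>k\<in>?Medium. t k * (\<Sum>p\<in>P. rho k p))
      = (\<Sum>p\<in>P. (\<Sum>k\<in>?Long. d * rho k p) + (\<Sum>k\<in>?Medium. t k * rho k p))"
    by (simp add: sum_distrib_left sum.distrib sum.swap[of _ P])
  also have "\<dots> \<le> (\<Sum>p\<in>P. d)"
    using picker by (rule sum_mono)
  also have "\<dots> = d * real (card P)"
    by simp
  finally show ?thesis .
qed

end
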